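(* In a public goods economy (as in the context), let $\mathbf{a}$ be an outcome, let $K$ be a path connected component of $\mathbf{D}_{\mathbf{a}}=\{\mathbf{a}'\in[0,1]^n:\mathbf{u}(\mathbf{a})\ge\mathbf{u}(\mathbf{a}')\}$, and let $\mathbf{x}\in K$ lie on the lower envelope of $K$, i.e. there is no $\mathbf{x}'\in K$ with $\mathbf{x}'\lneq\mathbf{x}$. Then for some (possibly empty) set of agents $C\subseteq N$ we have $\mathbf{u}_C(\mathbf{x})=\mathbf{u}_C(\mathbf{a})$ and $\mathbf{x}_{N\setminus C}=\mathbf{0}_{N\setminus C}$.
   Context: Agents $N=\{1,\dots,n\}$; outcomes are vectors in $[0,1]^n$. Vector orderings: $\mathbf{x}\ge\mathbf{y}$ coordinatewise; $\mathbf{x}>\mathbf{y}$ strict in every coordinate; $\mathbf{x}\gneq\mathbf{y}$ means $\mathbf{x}\ge\mathbf{y}$ and $x_j>y_j$ for some $j$ ($\mathbf{x}\lneq\mathbf{y}$ means $\mathbf{y}\gneq\mathbf{x}$). For $C\subseteq N$, $\mathbf{v}_C$ is the restriction of $\mathbf{v}$ to coordinates in $C$. The utility function $\mathbf{u}:[0,1]^n\to[0,1]^n$ is continuous, concave, and has positive externalities: whenever $\mathbf{a}\gneq\mathbf{a}'$ and $a_i=a'_i$, then $u_i(\mathbf{a})>u_i(\mathbf{a}')$. *)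

theory Defs
  imports "HOL-Analysis.Analysis"
begin

text \<open>Outcomes: vectors in [0,1]^n, agents indexed by the finite type 'n.\<close>
definition unit_cube :: "(real ^ 'n) set" where
  "unit_cube = {x. \<forall>i. 0 \<le> x $ i \<and> x $ i \<le> 1}"

text \<open>Public goods economy: u maps [0,1]^n to [0,1]^n, continuous, concave
  (each coordinate concave), with positive externalities.\<close>
definition public_goods_utility :: "(real ^ 'n \<Rightarrow> real ^ 'n) \<Rightarrow> bool" where
  "public_goods_utility u \<longleftrightarrow>
     (\<forall>x \<in> unit_cube. u x \<in> unit_cube) \<and>
     continuous_on unit_cube u \<and>
     (\<forall>i. concave_on unit_cube (\<lambda>x. u x $ i)) \<and>
     (\<forall>a \<in> unit_cube. \<forall>a' \<in> unit_cube. \<forall>i.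
        ((\<forall>j. a' $ j \<le> a $ j) \<and> (\<exists>j. a' $ j < a $ j) \<and> a $ i = a' $ i)
          \<longrightarrow> u a $ i > u a' $ i)"

definition lower_set :: "(real ^ 'n \<Rightarrow> real ^ 'n) \<Rightarrow> real ^ 'n \<Rightarrow> (real ^ 'n) set" where
  "lower_set u a = {a' \<in> unit_cube. \<forall>i. u a' $ i \<le> u a $ i}"

end

theory Submission
  imports Defs
begin

text \<open>Take \<open>C\<close> to be the agents whose utility bound is tight at \<open>x\<close>. If some agent
  \<open>i \<notin> C\<close> had \<open>x\<^sub>i > 0\<close>, lower \<open>x\<^sub>i\<close> slightly: by continuity \<open>u\<^sub>i\<close> stays below
  \<open>u\<^sub>i(a)\<close>, and by positive externalities every other agent's utility strictly drops. So a
  short segment from \<open>x\<close> downwards stays in \<open>D\<^sub>a\<close>, hence in the component \<open>K\<close>, and its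
  endpoint lies strictly below \<open>x\<close> in coordinate \<open>i\<close>, contradicting minimality.\<close>

lemma unit_cube_minus_axis:
  assumes "x \<in> unit_cube" "0 \<le> s" "s \<le> x $ i"
  shows "x - s *\<^sub>R axis i 1 \<in> unit_cube"
  unfolding unit_cube_def
proof (intro CollectI allI)
  fix j
  have "0 \<le> x $ j" "x $ j \<le> 1" using assms(1) by (auto simp: unit_cube_def)
  then show "0 \<le> (x - s *\<^sub>R axis i 1) $ j \<and> (x - s *\<^sub>R axis i 1) $ j \<le> 1"
    using assms(2,3) by (auto simp: axis_def)
qed

lemma utility_minus_axis_less:
  assumes "public_goods_utility u" "x \<in> unit_cube" "0 < s" "s \<le> x $ i" "j \<noteq> i"
  shows "u (x - s *\<^sub>R axis i 1) $ j < u x $ j"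
proof -
  have "x - s *\<^sub>R axis i 1 \<in> unit_cube"
    using assms by (intro unit_cube_minus_axis) auto
  moreover have "\<forall>k. (x - s *\<^sub>R axis i 1) $ k \<le> x $ k" "(x - s *\<^sub>R axis i 1) $ i < x $ i"
    "(x - s *\<^sub>R axis i 1) $ j = x $ j"
    using assms by (auto simp: axis_def)
  ultimately show ?thesis
    using assms(1,2) unfolding public_goods_utility_def by (metis (no_types, lifting))
qed

lemma lower_set_minus_axis:
  assumes "public_goods_utility u" "x \<in> lower_set u a" "0 \<le> s" "s \<le> x $ i"
    and "u (x - s *\<^sub>R axis i 1) $ i \<le> u a $ i"
  shows "x - s *\<^sub>R axis i 1 \<in> lower_set u a"
proof (cases "s = 0")
  case False
  have x: "x \<in> unit_cube" "\<And>j. u x $ j \<le> u a $ j"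
    using assms(2) by (auto simp: lower_set_def)
  have "u (x - s *\<^sub>R axis i 1) $ j \<le> u a $ j" for j
    using assms(3-5) False x utility_minus_axis_less[OF assms(1) x(1), of s i j]
    by (cases "j = i") (auto intro: order_trans[OF less_imp_le x(2)])
  then show ?thesis
    using unit_cube_minus_axis[OF x(1) assms(3,4)] by (simp add: lower_set_def)
qed (use assms in simp)

lemma closed_segment_minus_scaleR:
  fixes x v :: "'a::real_vector"
  assumes "z \<in> closed_segment x (x - d *\<^sub>R v)" "0 \<le> d"
  obtains s where "0 \<le> s" "s \<le> d" "z = x - s *\<^sub>R v"
proof -
  obtain t where t: "0 \<le> t" "t \<le> 1" and z: "z = (1 - t) *\<^sub>R x + t *\<^sub>R (x - d *\<^sub>R v)"
    using assms(1) unfolding closed_segment_def by blast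
  have "z = x - (t * d) *\<^sub>R v"
    by (simp add: z algebra_simps)
  moreover have "0 \<le> t * d" "t * d \<le> d"
    using t assms(2) by (auto intro: mult_left_le_one_le)
  ultimately show ?thesis using that by blast
qed

lemma lower_set_contains_descent_segment:
  assumes econ: "public_goods_utility u" and x: "x \<in> lower_set u a"
    and pos: "0 < x $ i" and slack: "u x $ i < u a $ i"
  obtains \<delta> where "0 < \<delta>" "\<delta> \<le> x $ i"
    "closed_segment x (x - \<delta> *\<^sub>R axis i 1) \<subseteq> lower_set u a"
proof -
  have xc: "x \<in> unit_cube" using x by (simp add: lower_set_def)
  have "continuous_on unit_cube u" using econ by (simp add: public_goods_utility_def)
  then obtain d where d: "0 < d"
    and close: "\<And>z. z \<in> unit_cube \<Longrightarrow> dist z x < d \<Longrightarrow> dist (u z) (u x) < u a $ i - u x $ i"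
    using xc slack unfolding continuous_on_iff by (meson diff_gt_0_iff_gt)
  define \<delta> where "\<delta> = min (x $ i) (d / 2)"
  have \<delta>: "0 < \<delta>" "\<delta> \<le> x $ i" "\<delta> < d" using d pos by (auto simp: \<delta>_def)
  have "x - s *\<^sub>R axis i 1 \<in> lower_set u a" if s: "0 \<le> s" "s \<le> \<delta>" for s
  proof (rule lower_set_minus_axis[OF econ x s(1)])
    show "s \<le> x $ i" using s \<delta> by linarith
    then have "x - s *\<^sub>R axis i 1 \<in> unit_cube" by (rule unit_cube_minus_axis[OF xc s(1)])
    moreover have "dist (x - s *\<^sub>R axis i 1) x < d" using s \<delta> by (simp add: dist_norm)
    ultimately have "dist (u (x - s *\<^sub>R axis i 1)) (u x) < u a $ i - u x $ i" by (rule close)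
    moreover have "dist (u (x - s *\<^sub>R axis i 1) $ i) (u x $ i) \<le> dist (u (x - s *\<^sub>R axis i 1)) (u x)"
      by (rule dist_vec_nth_le)
    ultimately show "u (x - s *\<^sub>R axis i 1) $ i \<le> u a $ i"
      by (simp add: dist_real_def)
  qed
  then have "closed_segment x (x - \<delta> *\<^sub>R axis i 1) \<subseteq> lower_set u a"
    using \<delta>(1) by (auto elim: closed_segment_minus_scaleR)
  with \<delta> that show ?thesis by blast
qed

theorem claim6:
  fixes u :: "real ^ 'n \<Rightarrow> real ^ 'n" and a x :: "real ^ 'n" and K :: "(real ^ 'n) set"
  assumes econ: "public_goods_utility u"
    and a_out: "a \<in> unit_cube"
    and K_comp: "\<exists>y \<in> lower_set u a. K = path_component_set (lower_set u a) y"
    and xK: "x \<in> K"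
    and lower: "\<not> (\<exists>x' \<in> K. (\<forall>j. x' $ j \<le> x $ j) \<and> (\<exists>j. x' $ j < x $ j))"
  shows "\<exists>C :: 'n set. (\<forall>i \<in> C. u x $ i = u a $ i) \<and> (\<forall>i. i \<notin> C \<longrightarrow> x $ i = 0)"
proof (intro exI[of _ "{i. u x $ i = u a $ i}"] conjI allI impI; simp)
  fix i assume tight: "u x $ i \<noteq> u a $ i"
  obtain y where K: "K = path_component_set (lower_set u a) y" using K_comp by blast
  have yx: "path_component (lower_set u a) y x" using xK K by simp
  then have x: "x \<in> lower_set u a" by (rule path_component_mem(2))
  then have slack: "u x $ i < u a $ i" and "0 \<le> x $ i"
    using tight by (auto simp: lower_set_def unit_cube_def less_le)
  show "x $ i = 0"
  proof (rule ccontr)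
    assume "x $ i \<noteq> 0"
    with \<open>0 \<le> x $ i\<close> have "0 < x $ i" by simp
    then obtain \<delta> where \<delta>: "0 < \<delta>"
      and seg: "closed_segment x (x - \<delta> *\<^sub>R axis i 1) \<subseteq> lower_set u a"
      using lower_set_contains_descent_segment[OF econ x _ slack] by blast
    have "x - \<delta> *\<^sub>R axis i 1 \<in> K"
      using path_component_trans[OF yx path_component_linepath[OF seg]] K by simp
    moreover have "\<forall>j. (x - \<delta> *\<^sub>R axis i 1) $ j \<le> x $ j" "(x - \<delta> *\<^sub>R axis i 1) $ i < x $ i"
      using \<delta> by (auto simp: axis_def)
    ultimately show False using lower by blast
  qed
qed

end
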